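(* Let $F$ be a Bayes-plausible distribution over posteriors (i.e. $F\in\mathcal{F}(\mu)$) with $|\operatorname{supp}(F)|\le n$ and $\operatorname{supp}(F)\subseteq \operatorname{int}\Delta(\Theta)$. Then there exists a contract $(M,t)$ that implements $F$, and the principal's expected cost under this contract is finite.
   Context: Let $\Theta=\{\theta_1,\dots,\theta_n\}$ be a finite set of states and $\mu\in\Delta(\Theta)$ a full-support prior. A belief $\mathbf{x}\in\Delta(\Theta)$ has entries $x^k$ = probability of $\theta_k$. $\mathcal{F}(\mu)$ is the set of Bayes-plausible distributions over posteriors, i.e. Borel probability measures on $\Delta(\Theta)$ with barycenter $\mu$. An agent who acquires $F\in\mathcal{F}(\mu)$ incurs cost $C(F)=\kappa\int c\,dF$, where $\kappa>0$ and $c:\Delta(\Theta)\to\mathbb{R}_+$ is strictly convex, twice continuously differentiable, bounded on the interior of $\Delta(\Theta)$, with $c(\mu)=0$. A contract $(M,t)$ consists of a compact message set $M$ and a transfer $t:M\times\Theta\to\mathbb{R}$ measured in the agent's utils; the agent values money by a strictly increasing, continuously differentiable $v$ with $v(0)=0$, so paying $t$ utils costs the principal $v^{-1}(t)$. The agent has an outside option $v_0\ge 0$. Timing: the principal offers $(M,t)$; the agent rejects (getting $v_0$) or accepts; if she accepts she chooses any $G\in\mathcal{F}(\mu)$, paying $C(G)$, privately observes a posterior $\mathbf{x}$ drawn from $G$, and then either walks away (receiving $v_0$) or sends a message $d\in M$ and receives $t(d,\theta)$ when the state $\theta$ is realized. For $d\in M$, $N(\mathbf{x}\mid d)=\sum_{k=1}^n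 x^k t(d,\theta_k)-\kappa c(\mathbf{x})$. A contract $(M,t)$ implements $F$ if $M=\operatorname{supp}(F)$ and the strategy "accept, acquire $F$, and at each posterior $\mathbf{x}\in\operatorname{supp}(F)$ send the message $\mathbf{x}$" is optimal for the agent among all strategies (rejecting; or accepting, acquiring any $G\in\mathcal{F}(\mu)$, and at each posterior either sending any, possibly randomized, message or walking away). The principal's expected cost of such a contract is $\int \sum_{k=1}^n x^k v^{-1}(t(\mathbf{x},\theta_k))\,dF(\mathbf{x})$. *)

theory Defs
  imports "HOL-Probability.Probability"
begin

text \<open>States are the elements of a finite type 'n (n = CARD('n)); beliefs are vectors
  in real^'n, x $ k being the probability of state k.\<close>

definition beliefs :: "(real^'n::finite) set" where
  "beliefs = {x. (\<forall>k. 0 \<le> x $ k) \<and> (\<Sum>k\<in>UNIV. x $ k) = 1}"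

definition strict_convex_on :: "'a::real_vector set \<Rightarrow> ('a \<Rightarrow> real) \<Rightarrow> bool" where
  "strict_convex_on S f \<longleftrightarrow>
     (\<forall>x\<in>S. \<forall>y\<in>S. x \<noteq> y \<longrightarrow> (\<forall>u::real. 0 < u \<and> u < 1 \<longrightarrow>
        f ((1 - u) *\<^sub>R x + u *\<^sub>R y) < (1 - u) * f x + u * f y))"

definition C2_on :: "(real^'n::finite \<Rightarrow> real) \<Rightarrow> (real^'n) set \<Rightarrow> bool" where
  "C2_on f S \<longleftrightarrow> (\<exists>(g :: real^'n \<Rightarrow> real^'n) (H :: real^'n \<Rightarrow> real^'n^'n).
      (\<forall>x\<in>S. (f has_derivative (\<lambda>h. g x \<bullet> h)) (at x) \<and>
               (g has_derivative (\<lambda>h. H x *v h)) (at x)) \<and> continuous_on S H)"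

definition msupp :: "'a::metric_space measure \<Rightarrow> 'a set" where
  "msupp M = {x \<in> space M. \<forall>e>0. emeasure M (ball x e \<inter> space M) > 0}"

definition bayes_plausible :: "real^'n::finite \<Rightarrow> (real^'n) measure \<Rightarrow> bool" where
  "bayes_plausible \<mu> G \<longleftrightarrow> prob_space G \<and> sets G = sets (restrict_space borel beliefs) \<and>
     (\<forall>k. (\<integral>x. x $ k \<partial>G) = \<mu> $ k)"

definition Npay :: "real \<Rightarrow> (real^'n::finite \<Rightarrow> real) \<Rightarrow> (real^'n \<Rightarrow> 'n \<Rightarrow> real)
     \<Rightarrow> real^'n \<Rightarrow> real^'n \<Rightarrow> real" where
  "Npay \<kappa> c t x d = (\<Sum>k\<in>UNIV. x $ k * t d k) - \<kappa> * c x"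

text \<open>Expected payoff at posterior x of a (possibly randomized) action: None = walk away
  (receiving v0, having paid the information cost), Some d = send message d.\<close>
definition post_payoff :: "real \<Rightarrow> (real^'n::finite \<Rightarrow> real) \<Rightarrow> real \<Rightarrow> (real^'n \<Rightarrow> 'n \<Rightarrow> real)
     \<Rightarrow> (real^'n \<Rightarrow> (real^'n) option pmf) \<Rightarrow> real^'n \<Rightarrow> real" where
  "post_payoff \<kappa> c v0 t \<sigma> x =
     measure_pmf.expectation (\<sigma> x)
       (\<lambda>a. case a of None \<Rightarrow> v0 - \<kappa> * c x | Some d \<Rightarrow> Npay \<kappa> c t x d)"

text \<open>The agent's payoff from the prescribed strategy
  must be at least v0 (rejection) and at least the payoff of any strategy
  "accept, acquire G, act according to sigma".\<close>
definition implements :: "real \<Rightarrow> (real^'n::finite \<Rightarrow> real) \<Rightarrow> real \<Rightarrow> real^'n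
     \<Rightarrow> (real^'n) set \<Rightarrow> (real^'n \<Rightarrow> 'n \<Rightarrow> real) \<Rightarrow> (real^'n) measure \<Rightarrow> bool" where
  "implements \<kappa> c v0 \<mu> M t F \<longleftrightarrow>
     M = msupp F \<and> compact M \<and> bayes_plausible \<mu> F \<and>
     integrable F (\<lambda>x. Npay \<kappa> c t x x) \<and>
     v0 \<le> (\<integral>x. Npay \<kappa> c t x x \<partial>F) \<and>
     (\<forall>G \<sigma>. bayes_plausible \<mu> G \<and>
        (\<forall>x\<in>space G. set_pmf (\<sigma> x) \<subseteq> insert None (Some ` M)) \<and>
        integrable G (post_payoff \<kappa> c v0 t \<sigma>) \<longrightarrow>
        (\<integral>x. post_payoff \<kappa> c v0 t \<sigma> x \<partial>G) \<le> (\<integral>x. Npay \<kappa> c t x x \<partial>F))"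

end

(* For message d pay the outside option v0 plus the supporting hyperplane of kappa c at d,
   evaluated at the vertices of the simplex.  Then N(x|d) = v0 - kappa (c x - c d - grad c(d).(x - d)),
   which by convexity of c is at most v0, with equality at x = d.  Truthful reporting therefore
   leaves the agent exactly v0 at every posterior, while any acquisition and reporting strategy
   (walking away is worth v0 - kappa c x) yields at most v0.  The transfers are bounded, since c
   is continuous on the compact simplex and supp F is finite, so the cost under the monotone
   inverse of v is integrable. *)

theory Submission
  imports Defs
begin

lemma above_tangent_if_convex_on_segment:
  fixes f :: "'a::real_normed_vector \<Rightarrow> real"
  assumes segment: "\<And>u. 0 < u \<Longrightarrow> u < 1 \<Longrightarrow> f ((1 - u) *\<^sub>R d + u *\<^sub>R x) \<le> (1 - u) * f d + u * f x"
    and deriv: "(f has_derivative f') (at d)"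
  shows "f d + f' (x - d) \<le> f x"
proof -
  define \<phi> where "\<phi> = (\<lambda>u::real. f ((1 - u) *\<^sub>R d + u *\<^sub>R x))"
  have path: "((\<lambda>u::real. (1 - u) *\<^sub>R d + u *\<^sub>R x) has_derivative (\<lambda>u. u *\<^sub>R (x - d))) (at 0)"
    by (auto intro!: derivative_eq_intros simp: algebra_simps)
  have "(f has_derivative f') (at ((\<lambda>u::real. (1 - u) *\<^sub>R d + u *\<^sub>R x) 0))"
    using deriv by simp
  from diff_chain_at[OF path this]
  have "(\<phi> has_derivative (\<lambda>u. f' (x - d) * u)) (at 0)"
    by (simp add: \<phi>_def o_def linear_scale[OF has_derivative_linear[OF deriv]] mult.commute)
  then have "(\<phi> has_field_derivative f' (x - d)) (at 0)"
    by (simp add: has_field_derivative_def)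
  then have "((\<lambda>u. (\<phi> u - \<phi> 0) / u) \<longlongrightarrow> f' (x - d)) (at 0)"
    by (simp add: has_field_derivative_iff)
  then have "((\<lambda>u. (\<phi> u - \<phi> 0) / u) \<longlongrightarrow> f' (x - d)) (at_right 0)"
    by (rule filterlim_mono) (simp_all add: at_le)
  moreover have "\<forall>\<^sub>F u in at_right 0. (\<phi> u - \<phi> 0) / u \<le> f x - f d"
    using eventually_at_right_real[OF zero_less_one]
  proof (rule eventually_mono)
    fix u :: real assume "u \<in> {0<..<1}"
    then show "(\<phi> u - \<phi> 0) / u \<le> f x - f d"
      using segment[of u] by (simp add: \<phi>_def field_simps)
  qed
  ultimately have "f' (x - d) \<le> f x - f d"
    by (rule tendsto_upperbound) simp
  then show ?thesis by simp
qed

lemma strict_convex_on_segment_le: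
  assumes "strict_convex_on S f" "x \<in> S" "y \<in> S" "0 < u" "u < 1"
  shows "f ((1 - u) *\<^sub>R x + u *\<^sub>R y) \<le> (1 - u) * f x + u * f y"
proof (cases "x = y")
  case True
  then show ?thesis by (simp add: algebra_simps flip: scaleR_left_distrib distrib_right)
next
  case False
  then show ?thesis using assms by (auto simp: strict_convex_on_def less_imp_le)
qed

lemma beliefs_component_abs_le_1:
  assumes "x \<in> beliefs"
  shows "\<bar>x $ k\<bar> \<le> 1"
proof -
  have "x $ k \<le> (\<Sum>i\<in>UNIV. x $ i)"
    using assms by (intro member_le_sum) (auto simp: beliefs_def)
  then show ?thesis using assms by (auto simp: beliefs_def)
qed

lemma compact_beliefs: "compact (beliefs :: (real^'n::finite) set)"
proof (subst compact_eq_bounded_closed, intro conjI)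
  have "norm x \<le> real CARD('n)" if "x \<in> beliefs" for x :: "real^'n"
  proof -
    have "norm x \<le> (\<Sum>k\<in>UNIV. \<bar>x $ k\<bar>)" by (rule norm_le_l1_cart)
    also have "\<dots> \<le> (\<Sum>k\<in>(UNIV::'n set). 1)"
      by (intro sum_mono beliefs_component_abs_le_1 that)
    finally show ?thesis by simp
  qed
  then show "bounded (beliefs :: (real^'n) set)" unfolding bounded_iff by blast
  have "beliefs = (\<Inter>k. {x::real^'n. 0 \<le> x $ k}) \<inter> {x. (\<Sum>k\<in>UNIV. x $ k) = 1}"
    by (auto simp: beliefs_def)
  moreover have "closed \<dots>"
    by (intro closed_Int closed_INT ballI closed_Collect_le closed_Collect_eq continuous_intros)
  ultimately show "closed (beliefs :: (real^'n) set)" by simp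
qed

lemma space_bayes_plausible:
  assumes "bayes_plausible \<mu> G"
  shows "space G = beliefs"
  using sets_eq_imp_space_eq[of G "restrict_space borel beliefs"] assms
  by (simp add: bayes_plausible_def space_restrict_space)

text \<open>Off M the transfer does not depend on the state, so that N(x|x) = v0 at every belief.\<close>
definition tangent_transfer :: "real \<Rightarrow> real \<Rightarrow> (real^'n::finite \<Rightarrow> real) \<Rightarrow> (real^'n \<Rightarrow> real^'n)
    \<Rightarrow> (real^'n) set \<Rightarrow> real^'n \<Rightarrow> 'n \<Rightarrow> real" where
  "tangent_transfer v0 \<kappa> c g M d k =
     v0 + \<kappa> * c d + (if d \<in> M then \<kappa> * (g d $ k - g d \<bullet> d) else 0)"

lemma Npay_tangent_transfer:
  assumes "x \<in> beliefs"
  shows "Npay \<kappa> c (tangent_transfer v0 \<kappa> c g M) x d =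
           v0 + \<kappa> * (c d + (if d \<in> M then g d \<bullet> (x - d) else 0) - c x)"
proof -
  have "(\<Sum>k\<in>UNIV. x $ k) = 1" using assms by (simp add: beliefs_def)
  moreover have "(\<Sum>k\<in>UNIV. x $ k * g d $ k) = g d \<bullet> x"
    by (simp add: inner_vec_def mult.commute)
  moreover have "(\<Sum>k\<in>UNIV. x $ k * tangent_transfer v0 \<kappa> c g M d k) =
      (\<Sum>k\<in>UNIV. x $ k) * (v0 + \<kappa> * c d) + (if d \<in> M then
        \<kappa> * ((\<Sum>k\<in>UNIV. x $ k * g d $ k) - (\<Sum>k\<in>UNIV. x $ k) * (g d \<bullet> d)) else 0)"
    by (simp add: tangent_transfer_def algebra_simps sum.distrib sum_subtractf
        sum_distrib_left sum_distrib_right)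
  ultimately show ?thesis
    by (simp add: Npay_def algebra_simps)
qed

lemma tangent_transfer_measurable:
  assumes "continuous_on beliefs c" "finite M"
  shows "(\<lambda>x. tangent_transfer v0 \<kappa> c g M x k) \<in> borel_measurable (restrict_space borel beliefs)"
proof (rule measurable_discrete_difference[where X = "M \<inter> beliefs"])
  show "(\<lambda>x. v0 + \<kappa> * c x) \<in> borel_measurable (restrict_space borel beliefs)"
    using borel_measurable_continuous_on_restrict[OF assms(1)] by measurable
  show "countable (M \<inter> beliefs)" using assms(2) by (simp add: countable_finite)
  show "{x} \<in> sets (restrict_space borel beliefs)" if "x \<in> M \<inter> beliefs" for x
    using that by (auto simp: sets_restrict_space image_iff intro!: bexI[of _ "{x}"])
qed (auto simp: tangent_transfer_def space_restrict_space)

lemma tangent_transfer_bounded: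
  assumes "continuous_on beliefs c" "finite M"
  obtains B where "\<And>x k. x \<in> beliefs \<Longrightarrow> \<bar>tangent_transfer v0 \<kappa> c g M x k\<bar> \<le> B"
proof -
  have "bounded (c ` beliefs)"
    by (intro compact_imp_bounded compact_continuous_image assms(1) compact_beliefs)
  then obtain Bc where Bc: "\<And>x. x \<in> beliefs \<Longrightarrow> \<bar>c x\<bar> \<le> Bc"
    unfolding bounded_iff by auto
  have "bounded ((\<lambda>(d, k). \<kappa> * (g d $ k - g d \<bullet> d)) ` (M \<times> UNIV))"
    using assms(2) by (intro finite_imp_bounded) simp
  then obtain Bg where Bg: "\<And>d k. d \<in> M \<Longrightarrow> \<bar>\<kappa> * (g d $ k - g d \<bullet> d)\<bar> \<le> Bg"
    unfolding bounded_iff by force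
  have "\<bar>tangent_transfer v0 \<kappa> c g M x k\<bar> \<le> \<bar>v0\<bar> + \<bar>\<kappa>\<bar> * Bc + \<bar>Bg\<bar>" if "x \<in> beliefs" for x k
  proof -
    have "\<bar>tangent_transfer v0 \<kappa> c g M x k\<bar>
        \<le> \<bar>v0\<bar> + \<bar>\<kappa> * c x\<bar> + \<bar>if x \<in> M then \<kappa> * (g x $ k - g x \<bullet> x) else 0\<bar>"
      unfolding tangent_transfer_def
      by (rule order_trans[OF abs_triangle_ineq], rule add_right_mono, rule abs_triangle_ineq)
    also have "\<dots> \<le> \<bar>v0\<bar> + \<bar>\<kappa>\<bar> * Bc + \<bar>Bg\<bar>"
      using mult_left_mono[OF Bc[OF that] abs_ge_zero, of \<kappa>] Bg[of x k]
      by (intro add_mono) (auto simp: abs_mult)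
    finally show ?thesis .
  qed
  then show ?thesis by (rule that)
qed

lemma post_payoff_le_outside_option:
  assumes "finite M" and \<sigma>: "set_pmf (\<sigma> x) \<subseteq> insert None (Some ` M)"
    and "0 \<le> \<kappa> * c x" and "\<And>d. d \<in> M \<Longrightarrow> Npay \<kappa> c t x d \<le> v0"
  shows "post_payoff \<kappa> c v0 t \<sigma> x \<le> v0"
  unfolding post_payoff_def
proof (rule measure_pmf.integral_le_const)
  have "finite (set_pmf (\<sigma> x))"
    using finite_subset[OF \<sigma>] assms(1) by simp
  then show "integrable (measure_pmf (\<sigma> x))
      (\<lambda>a. case a of None \<Rightarrow> v0 - \<kappa> * c x | Some d \<Rightarrow> Npay \<kappa> c t x d)"
    by (rule integrable_measure_pmf_finite)
  show "AE a in measure_pmf (\<sigma> x).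
      (case a of None \<Rightarrow> v0 - \<kappa> * c x | Some d \<Rightarrow> Npay \<kappa> c t x d) \<le> v0"
    using assms by (auto simp: AE_measure_pmf_iff split: option.split)
qed

lemma implementsI:
  assumes F: "bayes_plausible \<mu> F" and fin: "finite (msupp F)"
    and "0 \<le> \<kappa>" and "\<forall>x\<in>beliefs. 0 \<le> c x"
    and truthful: "\<And>x. x \<in> beliefs \<Longrightarrow> Npay \<kappa> c t x x = v0"
    and deviation: "\<And>x d. x \<in> beliefs \<Longrightarrow> d \<in> msupp F \<Longrightarrow> Npay \<kappa> c t x d \<le> v0"
  shows "implements \<kappa> c v0 \<mu> (msupp F) t F"
proof -
  have probF: "prob_space F" using F by (simp add: bayes_plausible_def)
  have Npay_eq: "x \<in> space F \<Longrightarrow> Npay \<kappa> c t x x = v0" for x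
    using truthful space_bayes_plausible[OF F] by auto
  have "integrable F (\<lambda>x. Npay \<kappa> c t x x) \<longleftrightarrow> integrable F (\<lambda>_. v0)"
    by (rule Bochner_Integration.integrable_cong) (simp_all add: Npay_eq)
  then have "integrable F (\<lambda>x. Npay \<kappa> c t x x)"
    using probF by (simp add: prob_space.finite_measure finite_measure.integrable_const)
  moreover have "(\<integral>x. Npay \<kappa> c t x x \<partial>F) = (\<integral>x. v0 \<partial>F)"
    by (rule Bochner_Integration.integral_cong) (simp_all add: Npay_eq)
  then have "(\<integral>x. Npay \<kappa> c t x x \<partial>F) = v0"
    using probF by (simp add: prob_space.prob_space)
  moreover have "(\<integral>x. post_payoff \<kappa> c v0 t \<sigma> x \<partial>G) \<le> v0"
    if G: "bayes_plausible \<mu> G" and \<sigma>: "\<forall>x\<in>space G. set_pmf (\<sigma> x) \<subseteq> insert None (Some ` msupp F)"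
      and "integrable G (post_payoff \<kappa> c v0 t \<sigma>)" for G \<sigma>
  proof (rule prob_space.integral_le_const)
    show "prob_space G" using G by (simp add: bayes_plausible_def)
    show "AE x in G. post_payoff \<kappa> c v0 t \<sigma> x \<le> v0"
      using assms \<sigma> space_bayes_plausible[OF G]
      by (intro AE_I2 post_payoff_le_outside_option[OF fin]) auto
  qed fact
  ultimately show ?thesis
    using F fin by (auto simp: implements_def finite_imp_compact)
qed

lemma integrable_expected_cost:
  fixes \<phi> :: "real \<Rightarrow> real" and t :: "real^'n::finite \<Rightarrow> 'n \<Rightarrow> real"
  assumes F: "bayes_plausible \<mu> F" and "mono \<phi>"
    and meas: "\<And>k. (\<lambda>x. t x k) \<in> borel_measurable (restrict_space borel beliefs)"
    and bound: "\<And>x k. x \<in> beliefs \<Longrightarrow> \<bar>t x k\<bar> \<le> B"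
  shows "integrable F (\<lambda>x. \<Sum>k\<in>UNIV. x $ k * \<phi> (t x k))"
proof (rule finite_measure.integrable_const_bound)
  show "finite_measure F"
    using F by (simp add: bayes_plausible_def prob_space.finite_measure)
  have [measurable]: "\<phi> \<in> borel_measurable borel"
    using \<open>mono \<phi>\<close> by (rule borel_measurable_mono)
  have [measurable]: "(\<lambda>x::real^'n. x $ k) \<in> borel_measurable (restrict_space borel beliefs)" for k
    by (intro borel_measurable_continuous_on_restrict continuous_intros)
  note meas[measurable]
  have "(\<lambda>x. \<Sum>k\<in>UNIV. x $ k * \<phi> (t x k)) \<in> borel_measurable (restrict_space borel beliefs)"
    by measurable
  then show "(\<lambda>x. \<Sum>k\<in>UNIV. x $ k * \<phi> (t x k)) \<in> borel_measurable F"
    using F by (simp add: bayes_plausible_def cong: measurable_cong_sets)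
  define C where "C = \<bar>\<phi> B\<bar> + \<bar>\<phi> (- B)\<bar>"
  have "norm (\<Sum>k\<in>UNIV. x $ k * \<phi> (t x k)) \<le> real CARD('n) * C" if x: "x \<in> beliefs" for x
  proof -
    have "\<bar>x $ k * \<phi> (t x k)\<bar> \<le> C" for k
    proof -
      have "\<phi> (- B) \<le> \<phi> (t x k)" "\<phi> (t x k) \<le> \<phi> B"
        using bound[OF x, of k] \<open>mono \<phi>\<close> by (simp_all add: monoD abs_le_iff)
      then have "\<bar>\<phi> (t x k)\<bar> \<le> C"
        unfolding C_def abs_le_iff using abs_ge_self[of "\<phi> B"] abs_ge_minus_self[of "\<phi> (- B)"]
          abs_ge_zero[of "\<phi> B"] abs_ge_zero[of "\<phi> (- B)"] by linarith
      then show ?thesis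
        using mult_mono[OF beliefs_component_abs_le_1[OF x]] by (simp add: abs_mult)
    qed
    then have "(\<Sum>k\<in>UNIV. \<bar>x $ k * \<phi> (t x k)\<bar>) \<le> real CARD('n) * C"
      using sum_mono[of UNIV "\<lambda>k. \<bar>x $ k * \<phi> (t x k)\<bar>" "\<lambda>_. C"] by simp
    then show ?thesis by (simp add: order_trans[OF sum_abs])
  qed
  then show "AE x in F. norm (\<Sum>k\<in>UNIV. x $ k * \<phi> (t x k)) \<le> real CARD('n) * C"
    using space_bayes_plausible[OF F] by auto
qed

theorem lemma2:
  fixes \<mu> :: "real^'n::finite" and \<kappa> v0 :: real and c :: "real^'n \<Rightarrow> real"
    and v :: "real \<Rightarrow> real" and F :: "(real^'n) measure"
  assumes mu_simplex: "\<mu> \<in> beliefs" and mu_full: "\<forall>k. \<mu> $ k > 0"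
    and kappa_pos: "\<kappa> > 0"
    and c_nonneg: "\<forall>x\<in>beliefs. c x \<ge> 0"
    and c_strict_convex: "strict_convex_on beliefs c"
    and c_cont: "continuous_on beliefs c"
    and c_C2: "\<exists>U. open U \<and> rel_interior beliefs \<subseteq> U \<and> C2_on c U"
    and c_bounded: "bounded (c ` rel_interior beliefs)"
    and c_mu: "c \<mu> = 0"
    and v_mono: "strict_mono v"
    and v_C1: "\<exists>v'. (\<forall>y. (v has_real_derivative v' y) (at y)) \<and> continuous_on UNIV v'"
    and v_0: "v 0 = 0"
    and v_surj: "surj v"
    and v0_nonneg: "v0 \<ge> 0"
    and F_bp: "bayes_plausible \<mu> F"
    and F_fin: "finite (msupp F)" and F_card: "card (msupp F) \<le> CARD('n)"
    and F_int: "msupp F \<subseteq> rel_interior beliefs"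
  shows "\<exists>M t. implements \<kappa> c v0 \<mu> M t F \<and>
           integrable F (\<lambda>x. \<Sum>k\<in>UNIV. x $ k * inv v (t x k))"
proof -
  obtain g :: "real^'n \<Rightarrow> real^'n"
    where grad: "\<And>d. d \<in> msupp F \<Longrightarrow> (c has_derivative (\<lambda>h. g d \<bullet> h)) (at d)"
    using c_C2 F_int unfolding C2_on_def by blast
  define t where "t = tangent_transfer v0 \<kappa> c g (msupp F)"
  have truthful: "Npay \<kappa> c t x x = v0" if "x \<in> beliefs" for x
    using Npay_tangent_transfer[OF that] by (simp add: t_def)
  have deviation: "Npay \<kappa> c t x d \<le> v0" if "x \<in> beliefs" "d \<in> msupp F" for x d
  proof -
    have "d \<in> beliefs" using that(2) F_int rel_interior_subset by blast
    then have "c d + g d \<bullet> (x - d) \<le> c x"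
      using above_tangent_if_convex_on_segment[OF strict_convex_on_segment_le[OF c_strict_convex]
          grad[OF that(2)]] that(1) by simp
    then show ?thesis
      using Npay_tangent_transfer[OF that(1)] that(2) kappa_pos
      by (simp add: t_def mult_le_0_iff)
  qed
  have "mono (inv v)"
    using strict_mono_inv[OF v_mono v_surj] strict_mono_imp_inj_on[OF v_mono]
    by (simp add: inv_f_f strict_mono_mono)
  moreover obtain B where "\<And>x k. x \<in> beliefs \<Longrightarrow> \<bar>t x k\<bar> \<le> B"
    using tangent_transfer_bounded[OF c_cont F_fin] unfolding t_def by blast
  ultimately have "integrable F (\<lambda>x. \<Sum>k\<in>UNIV. x $ k * inv v (t x k))"
    using tangent_transfer_measurable[OF c_cont F_fin]
    by (intro integrable_expected_cost[OF F_bp]) (simp_all add: t_def)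
  moreover have "implements \<kappa> c v0 \<mu> (msupp F) t F"
    using implementsI[OF F_bp F_fin _ c_nonneg truthful deviation] kappa_pos by simp
  ultimately show ?thesis by blast
qed

end
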